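(* Let $0<\alpha<1$ and fix $t>0$ with $\Lambda(t)=\sum_{j=1}^k\Lambda_j(t)>0$. Let $\tilde N$ have $P(\tilde N=n)=(\Lambda(t))^{n\alpha}E^{n+1}_{\alpha,n\alpha+1}(-(\Lambda(t))^\alpha)$, $n\ge0$, let $X_1,X_2,\dots$ be i.i.d., independent of $\tilde N$, with $P(X_i=j)=\Lambda_j(t)/\Lambda(t)$, $j=1,\dots,k$, and let $\widetilde{\mathcal{M}}=\sum_{i=1}^{\tilde N}X_i$. Then $$\mathbb{E}[\widetilde{\mathcal{M}}]=\frac{(\Lambda(t))^\alpha}{\Gamma(\alpha+1)}\cdot\frac{1}{\Lambda(t)}\sum_{j=1}^kj\Lambda_j(t),$$ $$\mathbb{V}[\widetilde{\mathcal{M}}]=\frac{(\Lambda(t))^\alpha}{\Gamma(\alpha+1)}\left[\frac{1}{\Lambda(t)}\sum_{j=1}^kj^2\Lambda_j(t)+\Big(\frac{1}{\Lambda(t)}\sum_{j=1}^kj\Lambda_j(t)\Big)^2\frac{(\Lambda(t))^\alpha}{\Gamma(\alpha+1)}\Big\{\frac{\alpha B(\alpha,1/2)}{2^{2\alpha-1}}-1\Big\}\right],$$ where $B$ is the beta function, and $\mathbb{V}[\widetilde{\mathcal{M}}]>\mathbb{E}[\widetilde{\mathcal{M}}]$ (over-dispersion).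
   Context: Fix $k\in\mathbb{N}$; $\Lambda_j(t)=\int_0^t\lambda_j$ for locally integrable $\lambda_j:[0,\infty)\to[0,\infty)$. The three-parameter Mittag-Leffler function is $E^{\delta}_{\alpha,\beta}(z)=\sum_{m=0}^\infty\frac{(\delta)_m z^m}{m!\,\Gamma(\alpha m+\beta)}$, where $(\delta)_m=\delta(\delta+1)\cdots(\delta+m-1)$. *)

theory Defs
  imports "HOL-Probability.Probability"
begin

definition mittag_leffler3 :: "real \<Rightarrow> real \<Rightarrow> real \<Rightarrow> real \<Rightarrow> real" where
  "mittag_leffler3 \<delta> \<alpha> \<beta> z =
     (\<Sum>m. pochhammer \<delta> m * z ^ m / (fact m * Gamma (\<alpha> * real m + \<beta>)))"

definition Lam :: "(real \<Rightarrow> real) \<Rightarrow> real \<Rightarrow> real" where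
  "Lam lam t = (LBINT s=0..t. lam s)"

end

theory Submission
  imports Defs
begin

text \<open>With \<open>x = \<Lambda>(t)\<^sup>\<alpha>\<close>, \<open>N\<close> has factorial moments
  \<open>\<Sum>\<^sub>n (n choose r) P(N = n) = x\<^sup>r / \<Gamma>(\<alpha> r + 1)\<close>: expanding each Mittag-Leffler series gives an
  absolutely convergent double series, and summing it in the other order collapses by binomial
  inversion. Conditioning on \<open>N = n\<close> and using independence gives Wald's identities
  \<open>E M = E N \<mu>\<close> and \<open>E M\<^sup>2 = E N \<nu> + E[N(N-1)] \<mu>\<^sup>2\<close>, where \<open>\<mu>, \<nu>\<close> are the first two moments of
  the jumps. Legendre's duplication formula identifies \<open>\<alpha> B(\<alpha>,1/2) / 2\<^sup>2\<^sup>\<alpha>\<^sup>-\<^sup>1\<close> with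
  \<open>E[N(N-1)] / (E N)\<^sup>2 = 2 \<Gamma>(\<alpha>+1)\<^sup>2 / \<Gamma>(2\<alpha>+1)\<close>, and comparing two Beta integrals shows this
  exceeds 1 for \<open>\<alpha> < 1\<close>, which is the over-dispersion.\<close>

section \<open>Gamma function inequalities\<close>

lemma Gamma_ratio_ge_powr:
  fixes z a :: real
  assumes z: "z > 0" and a: "0 \<le> a" "a \<le> 1"
  shows "z powr a * Gamma (z + 1 - a) \<le> Gamma (z + 1)"
proof -
  have Gz: "Gamma z > 0" and Gz1: "Gamma (z + 1) > 0" and Gza: "Gamma (z + 1 - a) > 0"
    using z a by (auto intro!: Gamma_real_pos)
  have "Gamma (z + 1) = z * Gamma z"
    using Gamma_plus1[of z] z by (simp add: nonpos_Ints_def)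
  hence lnGz: "ln (Gamma z) = ln (Gamma (z + 1)) - ln z"
    using ln_mult_pos[OF z Gz] by simp
  have "(ln \<circ> Gamma) ((1 - (1 - a)) *\<^sub>R z + (1 - a) *\<^sub>R (z + 1))
          \<le> (1 - (1 - a)) * (ln \<circ> Gamma) z + (1 - a) * (ln \<circ> Gamma) (z + 1)"
    using z a by (intro convex_onD[OF log_convex_Gamma_real]) auto
  hence "ln (Gamma (z + 1 - a)) \<le> ln (Gamma (z + 1)) - a * ln z"
    by (simp add: lnGz algebra_simps)
  hence "Gamma (z + 1 - a) \<le> exp (ln (Gamma (z + 1)) - a * ln z)"
    using Gza by (metis exp_le_cancel_iff exp_ln)
  also have "\<dots> = Gamma (z + 1) / z powr a"
    using Gz1 z by (simp add: exp_diff powr_def)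
  finally show ?thesis using z by (simp add: field_simps)
qed

lemma summable_power_div_Gamma:
  fixes a c :: real
  assumes a: "0 < a" "a \<le> 1" and c: "c \<ge> 0"
  shows "summable (\<lambda>n. c ^ n / Gamma (a * real n + 1))"
proof (rule summable_ratio_test[where c = "1/2"])
  let ?G = "\<lambda>n. Gamma (a * real n + 1)"
  show "norm (c ^ Suc n / ?G (Suc n)) \<le> 1/2 * norm (c ^ n / ?G n)"
    if n: "nat \<lceil>(2 * c + 1) powr (1 / a) / a\<rceil> \<le> n" for n
  proof -
    have G: "?G n > 0" "?G (Suc n) > 0" using a by (auto intro!: Gamma_real_pos add_nonneg_pos)
    have "(2 * c + 1) powr (1 / a) \<le> a * (real n + 1)"
    proof -
      have "(2 * c + 1) powr (1 / a) / a \<le> real n + 1" using n by linarith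
      thus ?thesis using a by (simp add: field_simps)
    qed
    hence "((2 * c + 1) powr (1 / a)) powr a \<le> (a * (real n + 1)) powr a"
      using a by (intro powr_mono2) auto
    hence "(2 * c + 1) * ?G n \<le> (a * (real n + 1)) powr a * ?G n"
      using a c G by (intro mult_right_mono) (auto simp: powr_powr)
    also have "\<dots> \<le> ?G (Suc n)"
      using Gamma_ratio_ge_powr[of "a * (real n + 1)" a] a
      by (simp add: algebra_simps add_pos_nonneg)
    finally have "c ^ Suc n / ?G (Suc n) \<le> c ^ Suc n / ((2 * c + 1) * ?G n)"
      using G c by (intro divide_left_mono) (auto intro!: mult_pos_pos)
    also have "\<dots> = c / (2 * c + 1) * (c ^ n / ?G n)" by (simp add: field_simps)
    also have "\<dots> \<le> 1/2 * (c ^ n / ?G n)"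
      using c G by (intro mult_right_mono) (auto simp: divide_simps)
    finally show ?thesis using G c by simp
  qed
qed simp

lemma Gamma_legendre_duplication_real:
  fixes a :: real
  assumes "a > 0"
  shows "Gamma a * Gamma (a + 1/2) = 2 powr (1 - 2 * a) * sqrt pi * Gamma (2 * a)"
proof -
  have "complex_of_real a \<notin> \<int>\<^sub>\<le>\<^sub>0" "complex_of_real a + 1/2 \<notin> \<int>\<^sub>\<le>\<^sub>0"
    using assms by (auto elim!: nonpos_Ints_cases simp: complex_eq_iff)
  from Gamma_legendre_duplication[OF this]
  have "complex_of_real (Gamma a) * complex_of_real (Gamma (a + 1/2))
          = complex_of_real (exp ((1 - 2 * a) * ln 2)) * complex_of_real (sqrt pi) * complex_of_real (Gamma (2 * a))"
    by (simp flip: exp_of_real Gamma_complex_of_real)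
  hence "Gamma a * Gamma (a + 1/2) = exp ((1 - 2 * a) * ln 2) * sqrt pi * Gamma (2 * a)"
    by (simp only: of_real_mult[symmetric] of_real_eq_iff)
  thus ?thesis by (simp add: powr_def)
qed

lemma Beta_half_eq_Gamma_ratio:
  fixes a :: real
  assumes a: "a > 0"
  shows "a * Beta a (1/2) / 2 powr (2 * a - 1) = 2 * Gamma (a + 1) ^ 2 / Gamma (2 * a + 1)"
proof -
  have pos: "Gamma a > 0" "Gamma (a + 1/2) > 0" "Gamma (2 * a) > 0"
    using a by (auto intro!: Gamma_real_pos)
  have "Beta a (1/2) * (Gamma a * Gamma (a + 1/2)) = Gamma a ^ 2 * sqrt pi"
    using pos by (simp add: Beta_def Gamma_one_half_real power2_eq_square)
  hence B: "Beta a (1/2) = Gamma a ^ 2 / (2 powr (1 - 2 * a) * Gamma (2 * a))"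
    unfolding Gamma_legendre_duplication_real[OF a] using pos by (simp add: field_simps)
  have "2 powr (1 - 2 * a) * 2 powr (2 * a - 1) = 1"
    by (simp add: powr_add[symmetric])
  hence "a * Beta a (1/2) / 2 powr (2 * a - 1) = a * Gamma a ^ 2 / Gamma (2 * a)"
    unfolding B by (simp add: field_simps)
  also have "\<dots> = 2 * (a * Gamma a) ^ 2 / (2 * a * Gamma (2 * a))"
    using a by (simp add: power2_eq_square)
  also have "\<dots> = 2 * Gamma (a + 1) ^ 2 / Gamma (2 * a + 1)"
    using Gamma_plus1[of a] Gamma_plus1[of "2 * a"] a by (simp add: nonpos_Ints_def add.commute)
  finally show ?thesis .
qed

lemma powr_le_one_plus_mult:
  fixes b a :: real
  assumes "b > 0" "0 \<le> a" "a \<le> 1"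
  shows "b powr a \<le> 1 + (b - 1) * a"
proof -
  have "exp ((1 - a) *\<^sub>R 0 + a *\<^sub>R ln b) \<le> (1 - a) * exp 0 + a * exp (ln b)"
    using assms by (intro convex_onD[OF exp_convex]) auto
  thus ?thesis using assms by (simp add: powr_def algebra_simps)
qed

lemma Beta_plus1_plus1_ge:
  fixes a :: real
  assumes a: "0 < a" "a \<le> 1"
  shows "4 powr (1 - a) / 6 \<le> Beta (a + 1) (a + 1)"
proof -
  have "Gamma (2::real) = 1" "Gamma (4::real) = 6"
    using Gamma_fact[of 1] Gamma_fact[of 3] by (simp_all add: fact_numeral)
  hence B22: "Beta 2 2 = (1/6 :: real)" by (simp add: Beta_def)
  have I: "((\<lambda>t. 4 powr (1 - a) * (t powr (2 - 1) * (1 - t) powr (2 - 1)))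
                   has_integral 4 powr (1 - a) * Beta 2 2) {0..1}"
    by (intro has_integral_mult_right has_integral_Beta_real) auto
  have J: "((\<lambda>t. t powr (a + 1 - 1) * (1 - t) powr (a + 1 - 1)) has_integral Beta (a + 1) (a + 1)) {0..1}"
    using a by (intro has_integral_Beta_real) auto
  have le: "4 powr (1 - a) * (t powr (2 - 1) * (1 - t) powr (2 - 1))
                   \<le> t powr (a + 1 - 1) * (1 - t) powr (a + 1 - 1)" if t: "t \<in> {0..1}" for t
  proof -
    \<comment> \<open>\<open>u \<le> u powr a\<close> for \<open>u = 4 t (1 - t) \<in> [0, 1]\<close>\<close>
    define u where "u = 4 * (t * (1 - t))"
    have "1 - u = (2 * t - 1) ^ 2" unfolding u_def by (simp add: power2_eq_square algebra_simps)
    hence u: "0 \<le> u" "u \<le> 1"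
      using t zero_le_power2[of "2 * t - 1"] unfolding u_def by (simp, linarith)
    have "4 powr (1 - a) * (t powr (2 - 1) * (1 - t) powr (2 - 1)) = u / 4 powr a"
      using t by (simp add: u_def powr_diff)
    also have "\<dots> \<le> u powr a / 4 powr a"
      using powr_mono'[of a 1 u] a u by (intro divide_right_mono) auto
    also have "\<dots> = (t * (1 - t)) powr a"
      using u by (simp add: powr_mult u_def)
    finally show ?thesis using t by (simp add: powr_mult)
  qed
  from has_integral_le[OF I J le] show ?thesis by (simp add: B22)
qed

lemma Gamma_duplication_ratio_gt_one:
  fixes a :: real
  assumes a: "0 < a" "a < 1"
  shows "2 * Gamma (a + 1) ^ 2 / Gamma (2 * a + 1) > 1"
proof -
  have "Gamma (2 * a + 1) > 0" using a by (intro Gamma_real_pos) simp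
  hence G: "Gamma (2 * a + 1) \<noteq> 0" by simp
  have "Beta (a + 1) (a + 1) = Gamma (a + 1) ^ 2 / ((2 * a + 1) * Gamma (2 * a + 1))"
    using Gamma_plus1[of "2 * a + 1"] a
    by (simp add: Beta_def power2_eq_square nonpos_Ints_def algebra_simps)
  with Beta_plus1_plus1_ge[of a] a
  have "2 * (2 * a + 1) * (4 powr (1 - a) / 6)
          \<le> 2 * (2 * a + 1) * (Gamma (a + 1) ^ 2 / ((2 * a + 1) * Gamma (2 * a + 1)))"
    by (intro mult_left_mono) auto
  also have "\<dots> = 2 * Gamma (a + 1) ^ 2 / Gamma (2 * a + 1)"
  proof -
    have "(2 * a + 1) * Gamma (2 * a + 1) \<noteq> 0" using a G by simp
    thus ?thesis using G by (simp add: field_simps)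
  qed
  moreover have "3 * 4 powr a < 4 * (2 * a + 1)"
    using powr_le_one_plus_mult[of 4 a] a by simp
  hence "1 < 2 * (2 * a + 1) * (4 powr (1 - a) / 6)"
    by (simp add: powr_diff field_simps)
  ultimately show ?thesis by linarith
qed

section \<open>Factorial moments of the fractional Poisson distribution\<close>

lemma pochhammer_succ_div_fact:
  "pochhammer (real n + 1) m / fact m = real ((n + m) choose n)"
proof -
  have "pochhammer (real n + 1) m / fact m = real (n + m) gchoose m"
    by (simp add: gbinomial_pochhammer')
  also have "\<dots> = real ((n + m) choose m)" by (simp add: binomial_gbinomial)
  finally show ?thesis using binomial_symmetric[of m "n + m"] by simp
qed

lemma sum_binomial_alternating_choose:
  "(\<Sum>n\<le>p. real (p choose n) * real (n choose r) * (-1) ^ (p - n)) = (if p = r then 1 else 0)"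
proof (cases "r \<le> p")
  case False
  then show ?thesis by (intro trans[OF sum.neutral]) auto
next
  case True
  have "(\<Sum>n\<le>p. real (p choose n) * real (n choose r) * (-1) ^ (p - n))
      = (\<Sum>n\<in>{r..p}. real (p choose r) * (real ((p - r) choose (n - r)) * (-1) ^ ((p - r) - (n - r))))"
  proof (rule sum.mono_neutral_cong_right)
    fix n assume n: "n \<in> {r..p}"
    have "real (p choose n) * real (n choose r) = real (p choose r) * real ((p - r) choose (n - r))"
      using n choose_mult[of r n p] by (simp flip: of_nat_mult)
    moreover have "p - n = (p - r) - (n - r)" using n by auto
    ultimately show "real (p choose n) * real (n choose r) * (-1) ^ (p - n)
                     = real (p choose r) * (real ((p - r) choose (n - r)) * (-1) ^ ((p - r) - (n - r)))"
      by simp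
  qed auto
  also have "\<dots> = real (p choose r) * (\<Sum>i\<le>p - r. real ((p - r) choose i) * (-1) ^ ((p - r) - i))"
    unfolding sum_distrib_left[symmetric]
    by (rule arg_cong[where f = "(*) _"], rule sum.reindex_bij_witness[where i = "\<lambda>i. i + r" and j = "\<lambda>n. n - r"])
       (use True in auto)
  also have "\<dots> = real (p choose r) * (1 + (-1)) ^ (p - r)"
    by (subst binomial_ring) simp
  finally show ?thesis using True by auto
qed

text \<open>For \<open>x = \<Lambda>(t)\<^sup>\<alpha>\<close> this is the law of \<open>N\<close> in the theorem; for \<open>a = 1\<close> it is the Poisson
  law with mean \<open>x\<close>.\<close>

definition fractional_poisson_pmf :: "real \<Rightarrow> real \<Rightarrow> nat \<Rightarrow> real" where
  "fractional_poisson_pmf a x n = x ^ n * mittag_leffler3 (real n + 1) a (real n * a + 1) (- x)"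

lemma fractional_poisson_pmf_sums:
  fixes a x :: real and n :: nat
  defines "u \<equiv> \<lambda>m. real ((n + m) choose n) * (-1) ^ m * x ^ (n + m) / Gamma (a * real (n + m) + 1)"
  assumes "x \<noteq> 0" and "summable u"
  shows "u sums fractional_poisson_pmf a x n"
proof -
  define e where "e m = pochhammer (real n + 1) m * (- x) ^ m / (fact m * Gamma (a * real m + (real n * a + 1)))" for m
  have u_e: "u m = x ^ n * e m" for m
  proof -
    have "a * real m + (real n * a + 1) = a * real (n + m) + 1" by (simp add: algebra_simps)
    thus ?thesis
      unfolding u_def e_def times_divide_times_eq[symmetric] pochhammer_succ_div_fact
      by (simp add: power_add power_minus[of x] ac_simps)
  qed
  have "summable e"
    using \<open>summable u\<close> summable_mult[of u "1 / x ^ n"] \<open>x \<noteq> 0\<close> by (simp add: u_e)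
  hence "(\<lambda>m. x ^ n * e m) sums (x ^ n * suminf e)" by (intro sums_mult summable_sums)
  thus ?thesis unfolding u_e fractional_poisson_pmf_def mittag_leffler3_def e_def .
qed

lemma summable_on_binomial_moment_terms:
  fixes a x :: real
  assumes a: "0 < a" "a \<le> 1" and x: "x \<ge> 0"
  shows "(\<lambda>(q, n). real (q choose n) * real (n choose r) * (-1) ^ (q - n) * x ^ q / Gamma (a * real q + 1))
           summable_on Sigma UNIV (\<lambda>q. {..q})" (is "?T summable_on _")
proof -
  let ?G = "\<lambda>q. Gamma (a * real q + 1)"
  have G: "?G q > 0" for q using a by (intro Gamma_real_pos) (simp add: add_nonneg_pos)
  define g where "g q = (\<Sum>n\<le>q. norm (?T (q, n)))" for q
  have g_nonneg: "g q \<ge> 0" for q unfolding g_def by (simp add: sum_nonneg)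
  \<comment> \<open>\<open>n choose r \<le> 2 ^ q\<close> and the row sum of \<open>q choose n\<close> is \<open>2 ^ q\<close>\<close>
  have g_le: "g q \<le> (4 * x) ^ q / ?G q" for q
  proof -
    have "(\<Sum>n\<le>q. real (q choose n) * real (n choose r)) \<le> (\<Sum>n\<le>q. real (q choose n) * 2 ^ q)"
    proof (intro sum_mono mult_left_mono)
      fix n assume "n \<in> {..q}"
      hence "n choose r \<le> 2 ^ q"
        by (intro order_trans[OF binomial_le_pow2 power_increasing]) auto
      thus "real (n choose r) \<le> 2 ^ q" by (metis of_nat_le_iff of_nat_numeral of_nat_power)
    qed simp
    also have "\<dots> = 4 ^ q"
      by (simp flip: sum_distrib_right of_nat_sum add: choose_row_sum power_mult_distrib[symmetric])
    finally have "(\<Sum>n\<le>q. real (q choose n) * real (n choose r)) * (x ^ q / ?G q) \<le> 4 ^ q * (x ^ q / ?G q)"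
      using x G[of q] by (intro mult_right_mono) auto
    also have "(\<Sum>n\<le>q. real (q choose n) * real (n choose r)) * (x ^ q / ?G q) = g q"
      unfolding g_def sum_distrib_right using x G[of q] by (intro sum.cong) (auto simp: abs_mult power_abs)
    finally show ?thesis by (simp add: power_mult_distrib)
  qed
  have "summable g"
    by (rule summable_comparison_test'[OF summable_power_div_Gamma[OF a, of "4 * x"]])
       (use g_le g_nonneg x in auto)
  hence "g summable_on UNIV" using g_nonneg by (simp add: summable_on_UNIV_nonneg_real_iff)
  hence "(\<lambda>z. norm (?T z)) summable_on Sigma UNIV (\<lambda>q. {..q})"
    by (intro summable_on_SigmaI[where g = g]) (auto simp: g_def)
  thus ?thesis by (rule abs_summable_summable)
qed

lemma binomial_moment_column_sum:
  fixes a x :: real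
  assumes x: "x \<noteq> 0"
    and I: "((\<lambda>q. real (q choose n) * real (n choose r) * (-1) ^ (q - n) * x ^ q / Gamma (a * real q + 1))
              has_sum I) {n..}" (is "(?T has_sum I) _")
  shows "I = real (n choose r) * fractional_poisson_pmf a x n"
proof -
  define u where "u m = real ((n + m) choose n) * (-1) ^ m * x ^ (n + m) / Gamma (a * real (n + m) + 1)"
    for m
  have "bij_betw (\<lambda>m. n + m) UNIV {n..}" by (rule bij_betwI[where g = "\<lambda>q. q - n"]) auto
  from has_sum_reindex_bij_betw[OF this, of ?T I] I have "((\<lambda>m. ?T (n + m)) has_sum I) UNIV"
    by (simp add: o_def)
  moreover have "?T (n + m) = real (n choose r) * u m" for m by (simp add: u_def)
  ultimately have I_sums: "(\<lambda>m. real (n choose r) * u m) sums I" by (simp add: has_sum_imp_sums)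
  show ?thesis
  proof (cases "n < r")
    case True
    hence "(\<lambda>m. 0) sums I" using I_sums by (simp add: binomial_eq_0)
    thus ?thesis using True by (simp add: binomial_eq_0 sums_zero sums_unique2)
  next
    case False
    hence "u sums (I / real (n choose r))"
      using sums_divide[OF I_sums, of "real (n choose r)"] by simp
    moreover from this have "u sums fractional_poisson_pmf a x n"
      using fractional_poisson_pmf_sums[where a = a and x = x and n = n] x
      unfolding u_def[abs_def] by (auto dest: sums_summable)
    ultimately have "I / real (n choose r) = fractional_poisson_pmf a x n"
      by (rule sums_unique2)
    thus ?thesis using False by (simp add: field_simps)
  qed
qed

lemma fractional_poisson_factorial_moment:
  fixes a x :: real
  assumes a: "0 < a" "a \<le> 1" and x: "x > 0"
  shows "(\<lambda>n. real (n choose r) * fractional_poisson_pmf a x n) sums (x ^ r / Gamma (a * real r + 1))"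
proof -
  define T where "T = (\<lambda>(q, n). real (q choose n) * real (n choose r) * (-1) ^ (q - n) * x ^ q
                                  / Gamma (a * real q + 1))"
  obtain S where S: "(T has_sum S) (Sigma UNIV (\<lambda>q. {..q}))"
    using summable_on_binomial_moment_terms[OF a, of x r] x unfolding T_def summable_on_def by auto
  \<comment> \<open>Summed row by row, binomial inversion leaves only the row \<open>q = r\<close>; summed column by
    column, the series gives the factorial moment.\<close>
  have rows: "((\<lambda>n. T (q, n)) has_sum (if q = r then x ^ r / Gamma (a * real r + 1) else 0)) {..q}" for q
  proof (rule has_sum_finiteI)
    have "(\<Sum>n\<le>q. T (q, n))
            = (\<Sum>n\<le>q. real (q choose n) * real (n choose r) * (-1) ^ (q - n)) * x ^ q / Gamma (a * real q + 1)"
      unfolding T_def by (simp add: sum_divide_distrib sum_distrib_right)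
    thus "(if q = r then x ^ r / Gamma (a * real r + 1) else 0) = (\<Sum>n\<le>q. T (q, n))"
      by (simp add: sum_binomial_alternating_choose)
  qed simp
  have "(\<lambda>q. if q = r then x ^ r / Gamma (a * real r + 1) else 0) sums S"
    by (intro has_sum_imp_sums has_sum_SigmaD[OF S rows])
  hence S_eq: "S = x ^ r / Gamma (a * real r + 1)"
    using sums_single[of r "\<lambda>_. x ^ r / Gamma (a * real r + 1)"] by (simp add: sums_unique2)
  have "bij_betw (\<lambda>(n, q). (q, n)) (Sigma UNIV (\<lambda>n. {n..})) (Sigma UNIV (\<lambda>q. {..q}))"
    by (rule bij_betwI[where g = "\<lambda>(q, n). (n, q)"]) auto
  from has_sum_reindex_bij_betw[OF this, of T] S
  have S': "((\<lambda>(n, q). T (q, n)) has_sum S) (Sigma UNIV (\<lambda>n. {n..}))"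
    by (simp add: case_prod_unfold)
  have columns: "((\<lambda>q. T (q, n)) has_sum (real (n choose r) * fractional_poisson_pmf a x n)) {n..}" for n
  proof -
    obtain I where I: "((\<lambda>q. T (q, n)) has_sum I) {n..}"
      using summable_on_SigmaD1[OF has_sum_imp_summable[OF S']] unfolding summable_on_def by auto
    with binomial_moment_column_sum[of x] x show ?thesis by (simp add: T_def)
  qed
  have "(\<lambda>n. real (n choose r) * fractional_poisson_pmf a x n) sums S"
    by (intro has_sum_imp_sums has_sum_SigmaD[OF S']) (simp add: columns)
  thus ?thesis unfolding S_eq .
qed

lemma fractional_poisson_mean:
  fixes a x :: real
  assumes "0 < a" "a \<le> 1" "x > 0"
  shows "(\<lambda>n. real n * fractional_poisson_pmf a x n) sums (x / Gamma (a + 1))"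
  using fractional_poisson_factorial_moment[OF assms, of 1] by (simp add: add.commute)

lemma fractional_poisson_second_factorial_moment:
  fixes a x :: real
  assumes "0 < a" "a \<le> 1" "x > 0"
  shows "(\<lambda>n. real n * (real n - 1) * fractional_poisson_pmf a x n)
           sums (2 * Gamma (a + 1) ^ 2 / Gamma (2 * a + 1) * (x / Gamma (a + 1))\<^sup>2)"
proof -
  have "real n * (real n - 1) = 2 * real (n choose 2)" for n
    by (induction n) (simp_all add: numeral_2_eq_2 algebra_simps)
  moreover have "Gamma (a + 1) > 0" using assms by (intro Gamma_real_pos) simp
  ultimately show ?thesis
    using sums_mult[OF fractional_poisson_factorial_moment[OF assms, of 2], of 2]
    by (simp add: mult_ac power_divide)
qed

lemma sum_sum_if_eq:
  fixes a b :: real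
  assumes "finite A"
  shows "(\<Sum>i\<in>A. \<Sum>l\<in>A. if i = l then a else b) = real (card A) * a + real (card A) * (real (card A) - 1) * b"
proof -
  have "(\<Sum>l\<in>A. if i = l then a else b) = a + (real (card A) - 1) * b" if "i \<in> A" for i
  proof -
    have "(\<Sum>l\<in>A. if i = l then a else b) = (\<Sum>l\<in>A. b + (if i = l then a - b else 0))"
      by (intro sum.cong) auto
    also have "\<dots> = real (card A) * b + (a - b)" using that assms by (simp add: sum.distrib)
    finally show ?thesis by (simp add: algebra_simps)
  qed
  hence "(\<Sum>i\<in>A. \<Sum>l\<in>A. if i = l then a else b) = (\<Sum>i\<in>A. a + (real (card A) - 1) * b)"
    by (intro sum.cong) auto
  thus ?thesis by (simp add: algebra_simps)
qed

lemma positive_integer_moments: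
  fixes q :: "nat \<Rightarrow> real"
  assumes q: "\<And>j. j \<in> {1..k} \<Longrightarrow> q j \<ge> 0" and q_sum: "(\<Sum>j=1..k. q j) = 1"
  shows "1 \<le> (\<Sum>j=1..k. real j * q j)" and "(\<Sum>j=1..k. real j * q j) \<le> (\<Sum>j=1..k. (real j)\<^sup>2 * q j)"
proof -
  have "(\<Sum>j=1..k. 1 * q j) \<le> (\<Sum>j=1..k. real j * q j)"
    using q by (intro sum_mono mult_right_mono) auto
  thus "1 \<le> (\<Sum>j=1..k. real j * q j)" using q_sum by simp
  show "(\<Sum>j=1..k. real j * q j) \<le> (\<Sum>j=1..k. (real j)\<^sup>2 * q j)"
    using q by (intro sum_mono mult_right_mono) (auto simp: power2_eq_square)
qed

context prob_space
begin

lemma expectation_finite_valued: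
  fixes Y :: "'a \<Rightarrow> 'b" and f :: "'b \<Rightarrow> real"
  assumes Y[measurable]: "Y \<in> measurable M (count_space UNIV)" and S: "finite S"
    and q: "\<And>j. j \<in> S \<Longrightarrow> prob {\<omega> \<in> space M. Y \<omega> = j} = q j" and q_sum: "sum q S = 1"
  shows "integrable M (\<lambda>\<omega>. f (Y \<omega>))" and "expectation (\<lambda>\<omega>. f (Y \<omega>)) = (\<Sum>j\<in>S. f j * q j)"
proof -
  let ?g = "\<lambda>\<omega>. \<Sum>j\<in>S. f j * indicator {\<omega> \<in> space M. Y \<omega> = j} \<omega>"
  have "prob (\<Union>j\<in>S. {\<omega> \<in> space M. Y \<omega> = j}) = (\<Sum>j\<in>S. prob {\<omega> \<in> space M. Y \<omega> = j})"
    using S by (intro measure_finite_Union) (auto simp: disjoint_family_on_def)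
  also have "\<dots> = 1" using q q_sum by simp
  also have "(\<Union>j\<in>S. {\<omega> \<in> space M. Y \<omega> = j}) = {\<omega> \<in> space M. Y \<omega> \<in> S}" by auto
  finally have "prob {\<omega> \<in> space M. Y \<omega> \<in> S} = 1" .
  moreover have "{\<omega> \<in> space M. Y \<omega> \<in> S} \<in> events"
    using measurable_sets[OF Y, of S] by (simp add: vimage_def Int_def conj_commute)
  ultimately have "AE \<omega> in M. Y \<omega> \<in> S" by (simp add: prob_eq_1)
  from this AE_space have AE_eq: "AE \<omega> in M. f (Y \<omega>) = ?g \<omega>"
  proof eventually_elim
    case (elim \<omega>)
    then have "?g \<omega> = (\<Sum>j\<in>S. if Y \<omega> = j then f j else 0)"
      by (intro sum.cong) (auto simp: indicator_def)
    with elim S show ?case by simp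
  qed
  have fY: "(\<lambda>\<omega>. f (Y \<omega>)) \<in> borel_measurable M" by (rule measurable_compose[OF Y]) simp
  have g_int: "integrable M ?g"
    by (intro Bochner_Integration.integrable_sum integrable_mult_right integrable_real_indicator)
       (auto simp: emeasure_eq_measure)
  show "integrable M (\<lambda>\<omega>. f (Y \<omega>))"
    using AE_eq fY by (intro integrable_cong_AE_imp[OF g_int]) (auto elim: eventually_mono)
  have "expectation (\<lambda>\<omega>. f (Y \<omega>)) = expectation ?g"
    using AE_eq fY borel_measurable_integrable[OF g_int] by (intro integral_cong_AE) auto
  also have "\<dots> = (\<Sum>j\<in>S. f j * prob {\<omega> \<in> space M. Y \<omega> = j})"
    by (subst Bochner_Integration.integral_sum)
       (auto simp: emeasure_eq_measure Int_absorb2 intro!: integrable_mult_right integrable_real_indicator)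
  also have "\<dots> = (\<Sum>j\<in>S. f j * q j)" using q by simp
  finally show "expectation (\<lambda>\<omega>. f (Y \<omega>)) = (\<Sum>j\<in>S. f j * q j)" .
qed

lemma indep_vars_expectation_prod:
  fixes Y :: "'i \<Rightarrow> 'a \<Rightarrow> 'b" and F :: "'i \<Rightarrow> 'b \<Rightarrow> real"
  assumes indep: "indep_vars (\<lambda>_. count_space UNIV) Y UNIV" and I: "finite I"
    and int: "\<And>i. i \<in> I \<Longrightarrow> integrable M (\<lambda>\<omega>. F i (Y i \<omega>))"
  shows "integrable M (\<lambda>\<omega>. \<Prod>i\<in>I. F i (Y i \<omega>))"
    and "expectation (\<lambda>\<omega>. \<Prod>i\<in>I. F i (Y i \<omega>)) = (\<Prod>i\<in>I. expectation (\<lambda>\<omega>. F i (Y i \<omega>)))"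
proof -
  have "indep_vars (\<lambda>_. borel) (\<lambda>i \<omega>. F i (Y i \<omega>)) I"
    by (rule indep_vars_subset[OF indep_vars_compose2[OF indep]]) auto
  from indep_vars_integrable[OF I this int] indep_vars_lebesgue_integral[OF I this int]
  show "integrable M (\<lambda>\<omega>. \<Prod>i\<in>I. F i (Y i \<omega>))"
    and "expectation (\<lambda>\<omega>. \<Prod>i\<in>I. F i (Y i \<omega>)) = (\<Prod>i\<in>I. expectation (\<lambda>\<omega>. F i (Y i \<omega>)))"
    by auto
qed

lemma expectation_level_set_mult_prod:
  fixes N :: "'a \<Rightarrow> nat" and X :: "nat \<Rightarrow> 'a \<Rightarrow> nat" and g :: "nat \<Rightarrow> real"
  assumes indep: "indep_vars (\<lambda>_. count_space UNIV) (case_option N X) UNIV"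
    and J: "finite J" and int: "\<And>i. i \<in> J \<Longrightarrow> integrable M (\<lambda>\<omega>. g (X i \<omega>))"
  shows "integrable M (\<lambda>\<omega>. of_bool (N \<omega> = n) * (\<Prod>i\<in>J. g (X i \<omega>)))"
    and "expectation (\<lambda>\<omega>. of_bool (N \<omega> = n) * (\<Prod>i\<in>J. g (X i \<omega>)))
           = prob {\<omega> \<in> space M. N \<omega> = n} * (\<Prod>i\<in>J. expectation (\<lambda>\<omega>. g (X i \<omega>)))"
proof -
  define F :: "nat option \<Rightarrow> nat \<Rightarrow> real" where "F = case_option (\<lambda>m. of_bool (m = n)) (\<lambda>_. g)"
  define I where "I = insert None (Some ` J)"
  have "N \<in> measurable M (count_space UNIV)"
    using indep unfolding indep_vars_def by (metis UNIV_I option.simps(4))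
  hence level: "{\<omega> \<in> space M. N \<omega> = n} \<in> events"
    using measurable_sets[of N M "count_space UNIV" "{n}"] by (simp add: vimage_def Int_def conj_commute)
  have of_bool_eq: "(\<lambda>\<omega>. of_bool (N \<omega> = n) :: real) = indicator {\<omega>. N \<omega> = n}"
    by (auto simp: indicator_def)
  have "{\<omega>. N \<omega> = n} \<inter> space M = {\<omega> \<in> space M. N \<omega> = n}" by auto
  hence int_level: "integrable M (\<lambda>\<omega>. of_bool (N \<omega> = n) :: real)"
    and E_level: "expectation (\<lambda>\<omega>. of_bool (N \<omega> = n) :: real) = prob {\<omega> \<in> space M. N \<omega> = n}"
    using level by (simp_all add: of_bool_eq integrable_indicator_iff emeasure_eq_measure)
  have prod_I: "(\<Prod>u\<in>I. h u) = h None * (\<Prod>i\<in>J. h (Some i))" for h :: "nat option \<Rightarrow> real"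
    unfolding I_def using J by (simp add: prod.reindex)
  have I: "finite I" unfolding I_def using J by simp
  have int_I: "u \<in> I \<Longrightarrow> integrable M (\<lambda>\<omega>. F u (case_option N X u \<omega>))" for u
    using int int_level unfolding I_def F_def by auto
  from indep_vars_expectation_prod[OF indep I int_I]
  show "integrable M (\<lambda>\<omega>. of_bool (N \<omega> = n) * (\<Prod>i\<in>J. g (X i \<omega>)))"
    and "expectation (\<lambda>\<omega>. of_bool (N \<omega> = n) * (\<Prod>i\<in>J. g (X i \<omega>)))
           = prob {\<omega> \<in> space M. N \<omega> = n} * (\<Prod>i\<in>J. expectation (\<lambda>\<omega>. g (X i \<omega>)))"
    by (simp_all add: prod_I F_def E_level)
qed

lemma expectation_split_by_value:
  fixes N :: "'a \<Rightarrow> nat" and g :: "nat \<Rightarrow> 'a \<Rightarrow> real"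
  assumes int: "\<And>n. integrable M (\<lambda>\<omega>. of_bool (N \<omega> = n) * g n \<omega>)"
    and nonneg: "\<And>n \<omega>. g n \<omega> \<ge> 0"
    and sums: "(\<lambda>n. expectation (\<lambda>\<omega>. of_bool (N \<omega> = n) * g n \<omega>)) sums s"
  shows "integrable M (\<lambda>\<omega>. g (N \<omega>) \<omega>)" and "expectation (\<lambda>\<omega>. g (N \<omega>) \<omega>) = s"
proof -
  have pointwise: "(\<Sum>n. of_bool (N \<omega> = n) * g n \<omega>) = g (N \<omega>) \<omega>" for \<omega>
    by (subst suminf_finite[of "{N \<omega>}"]) auto
  have AE_summable: "AE \<omega> in M. summable (\<lambda>n. norm (of_bool (N \<omega> = n) * g n \<omega>))"
    by (intro AE_I2 summable_finite[of "{N _}"]) auto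
  have "summable (\<lambda>n. expectation (\<lambda>\<omega>. norm (of_bool (N \<omega> = n) * g n \<omega>)))"
    using sums nonneg by (simp add: sums_iff abs_mult)
  note series = integrable_suminf[OF int AE_summable this] sums_integral[OF int AE_summable this]
  from series(1) show "integrable M (\<lambda>\<omega>. g (N \<omega>) \<omega>)" unfolding pointwise .
  from series(2) show "expectation (\<lambda>\<omega>. g (N \<omega>) \<omega>) = s"
    unfolding pointwise using sums by (rule sums_unique2)
qed

end

text \<open>\<open>None\<close> indexes \<open>N\<close> and \<open>Some i\<close> the jump \<open>X i\<close>; only the jumps with \<open>i \<ge> 1\<close> are used.\<close>

locale compound_sum = prob_space +
  fixes N :: "'a \<Rightarrow> nat" and X :: "nat \<Rightarrow> 'a \<Rightarrow> nat" and k :: nat and q :: "nat \<Rightarrow> real"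
  assumes indep: "indep_vars (\<lambda>_. count_space UNIV) (case_option N X) UNIV"
    and distX: "\<And>i j. i \<ge> 1 \<Longrightarrow> j \<in> {1..k} \<Longrightarrow> prob {\<omega> \<in> space M. X i \<omega> = j} = q j"
    and q_sum: "(\<Sum>j=1..k. q j) = 1"
begin

definition jump_mean :: real where "jump_mean = (\<Sum>j=1..k. real j * q j)"

definition jump_second_moment :: real where "jump_second_moment = (\<Sum>j=1..k. (real j)\<^sup>2 * q j)"

lemma level_set_jump_moments:
  assumes i: "i \<ge> 1"
  shows "integrable M (\<lambda>\<omega>. of_bool (N \<omega> = n) * real (X i \<omega>))"
    and "expectation (\<lambda>\<omega>. of_bool (N \<omega> = n) * real (X i \<omega>))
           = prob {\<omega> \<in> space M. N \<omega> = n} * jump_mean"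
    and "l \<ge> 1 \<Longrightarrow> integrable M (\<lambda>\<omega>. of_bool (N \<omega> = n) * (real (X i \<omega>) * real (X l \<omega>)))"
    and "l \<ge> 1 \<Longrightarrow> expectation (\<lambda>\<omega>. of_bool (N \<omega> = n) * (real (X i \<omega>) * real (X l \<omega>)))
           = prob {\<omega> \<in> space M. N \<omega> = n} * (if i = l then jump_second_moment else jump_mean\<^sup>2)"
proof -
  have "X i \<in> measurable M (count_space UNIV)" for i
    using indep unfolding indep_vars_def by (metis UNIV_I option.simps(5))
  note moments_X = expectation_finite_valued[OF this finite_atLeastAtMost distX q_sum]
  note level = expectation_level_set_mult_prod[OF indep]
  show "integrable M (\<lambda>\<omega>. of_bool (N \<omega> = n) * real (X i \<omega>))"
    "expectation (\<lambda>\<omega>. of_bool (N \<omega> = n) * real (X i \<omega>)) = prob {\<omega> \<in> space M. N \<omega> = n} * jump_mean"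
    using level[of "{i}" real n] moments_X[OF i, of real] by (simp_all add: jump_mean_def)
  assume l: "l \<ge> 1"
  have "integrable M (\<lambda>\<omega>. of_bool (N \<omega> = n) * (real (X i \<omega>) * real (X l \<omega>))) \<and>
        expectation (\<lambda>\<omega>. of_bool (N \<omega> = n) * (real (X i \<omega>) * real (X l \<omega>)))
          = prob {\<omega> \<in> space M. N \<omega> = n} * (if i = l then jump_second_moment else jump_mean\<^sup>2)"
  proof (cases "i = l")
    case True
    thus ?thesis
      using level[of "{i}" "\<lambda>j. (real j)\<^sup>2" n] moments_X[OF i, of "\<lambda>j. (real j)\<^sup>2"]
      by (simp add: jump_second_moment_def power2_eq_square)
  next
    case False
    thus ?thesis
      using level[of "{i, l}" real n] moments_X[OF i, of real] moments_X[OF l, of real]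
      by (auto simp: jump_mean_def power2_eq_square)
  qed
  thus "integrable M (\<lambda>\<omega>. of_bool (N \<omega> = n) * (real (X i \<omega>) * real (X l \<omega>)))"
    "expectation (\<lambda>\<omega>. of_bool (N \<omega> = n) * (real (X i \<omega>) * real (X l \<omega>)))
       = prob {\<omega> \<in> space M. N \<omega> = n} * (if i = l then jump_second_moment else jump_mean\<^sup>2)"
    by auto
qed

lemma compound_sum_level_moments:
  fixes n :: nat
  defines "p \<equiv> prob {\<omega> \<in> space M. N \<omega> = n}"
  shows "integrable M (\<lambda>\<omega>. of_bool (N \<omega> = n) * (\<Sum>i=1..n. real (X i \<omega>)))"
    and "expectation (\<lambda>\<omega>. of_bool (N \<omega> = n) * (\<Sum>i=1..n. real (X i \<omega>))) = p * (real n * jump_mean)"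
    and "integrable M (\<lambda>\<omega>. of_bool (N \<omega> = n) * (\<Sum>i=1..n. real (X i \<omega>))\<^sup>2)"
    and "expectation (\<lambda>\<omega>. of_bool (N \<omega> = n) * (\<Sum>i=1..n. real (X i \<omega>))\<^sup>2)
           = p * (real n * jump_second_moment + real n * (real n - 1) * jump_mean\<^sup>2)"
proof -
  note jumps = level_set_jump_moments[where n = n, folded p_def]
  have sum_eq: "of_bool (N \<omega> = n) * (\<Sum>i=1..n. real (X i \<omega>))
                  = (\<Sum>i=1..n. of_bool (N \<omega> = n) * real (X i \<omega>))" for \<omega>
    by (simp add: sum_distrib_left)
  have square_eq: "of_bool (N \<omega> = n) * (\<Sum>i=1..n. real (X i \<omega>))\<^sup>2
      = (\<Sum>i=1..n. \<Sum>l=1..n. of_bool (N \<omega> = n) * (real (X i \<omega>) * real (X l \<omega>)))" for \<omega>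
    unfolding power2_eq_square sum_product by (simp add: sum_distrib_left)
  have int_row: "integrable M (\<lambda>\<omega>. \<Sum>l=1..n. of_bool (N \<omega> = n) * (real (X i \<omega>) * real (X l \<omega>)))"
    if "i \<ge> 1" for i
    by (rule Bochner_Integration.integrable_sum) (rule jumps(3)[OF that]; simp)
  show "integrable M (\<lambda>\<omega>. of_bool (N \<omega> = n) * (\<Sum>i=1..n. real (X i \<omega>)))"
    unfolding sum_eq by (rule Bochner_Integration.integrable_sum) (rule jumps(1); simp)
  show "expectation (\<lambda>\<omega>. of_bool (N \<omega> = n) * (\<Sum>i=1..n. real (X i \<omega>))) = p * (real n * jump_mean)"
    unfolding sum_eq by (subst Bochner_Integration.integral_sum) (auto intro: jumps(1) simp: jumps(2))
  show "integrable M (\<lambda>\<omega>. of_bool (N \<omega> = n) * (\<Sum>i=1..n. real (X i \<omega>))\<^sup>2)"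
    unfolding square_eq by (rule Bochner_Integration.integrable_sum) (rule int_row; simp)
  have "expectation (\<lambda>\<omega>. of_bool (N \<omega> = n) * (\<Sum>i=1..n. real (X i \<omega>))\<^sup>2)
          = p * (\<Sum>i=1..n. \<Sum>l=1..n. if i = l then jump_second_moment else jump_mean\<^sup>2)"
    unfolding square_eq sum_distrib_left
    by (subst Bochner_Integration.integral_sum, use int_row in simp, intro sum.cong refl,
        subst Bochner_Integration.integral_sum) (auto intro: jumps(3) simp: jumps(4))
  also have "\<dots> = p * (real n * jump_second_moment + real n * (real n - 1) * jump_mean\<^sup>2)"
    using sum_sum_if_eq[of "{1..n}" jump_second_moment "jump_mean\<^sup>2"] by simp
  finally show "expectation (\<lambda>\<omega>. of_bool (N \<omega> = n) * (\<Sum>i=1..n. real (X i \<omega>))\<^sup>2)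
      = p * (real n * jump_second_moment + real n * (real n - 1) * jump_mean\<^sup>2)" .
qed

lemma compound_sum_expectation_variance:
  assumes mean_N: "(\<lambda>n. real n * prob {\<omega> \<in> space M. N \<omega> = n}) sums e1"
    and factorial_moment_N: "(\<lambda>n. real n * (real n - 1) * prob {\<omega> \<in> space M. N \<omega> = n}) sums e2"
  shows "expectation (\<lambda>\<omega>. \<Sum>i=1..N \<omega>. real (X i \<omega>)) = e1 * jump_mean"
    and "variance (\<lambda>\<omega>. \<Sum>i=1..N \<omega>. real (X i \<omega>))
           = e1 * jump_second_moment + e2 * jump_mean\<^sup>2 - (e1 * jump_mean)\<^sup>2"
proof -
  note level = compound_sum_level_moments
  have "(\<lambda>n. expectation (\<lambda>\<omega>. of_bool (N \<omega> = n) * (\<Sum>i=1..n. real (X i \<omega>)))) sums (e1 * jump_mean)"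
    unfolding level(2) using sums_mult2[OF mean_N, of jump_mean] by (simp add: mult_ac)
  from expectation_split_by_value[OF level(1) _ this]
  have mean: "integrable M (\<lambda>\<omega>. \<Sum>i=1..N \<omega>. real (X i \<omega>))"
    "expectation (\<lambda>\<omega>. \<Sum>i=1..N \<omega>. real (X i \<omega>)) = e1 * jump_mean"
    by (simp_all add: sum_nonneg)
  have "(\<lambda>n. expectation (\<lambda>\<omega>. of_bool (N \<omega> = n) * (\<Sum>i=1..n. real (X i \<omega>))\<^sup>2))
          sums (e1 * jump_second_moment + e2 * jump_mean\<^sup>2)"
    using sums_add[OF sums_mult2[OF mean_N, of jump_second_moment]
                      sums_mult2[OF factorial_moment_N, of "jump_mean\<^sup>2"]]
    unfolding level(4) by (simp add: algebra_simps)
  from expectation_split_by_value[OF level(3) _ this]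
  have square: "integrable M (\<lambda>\<omega>. (\<Sum>i=1..N \<omega>. real (X i \<omega>))\<^sup>2)"
    "expectation (\<lambda>\<omega>. (\<Sum>i=1..N \<omega>. real (X i \<omega>))\<^sup>2) = e1 * jump_second_moment + e2 * jump_mean\<^sup>2"
    by simp_all
  show "expectation (\<lambda>\<omega>. \<Sum>i=1..N \<omega>. real (X i \<omega>)) = e1 * jump_mean" by (fact mean(2))
  show "variance (\<lambda>\<omega>. \<Sum>i=1..N \<omega>. real (X i \<omega>))
          = e1 * jump_second_moment + e2 * jump_mean\<^sup>2 - (e1 * jump_mean)\<^sup>2"
    by (subst variance_eq) (use mean square in auto)
qed


lemma compound_sum_overdispersion:
  assumes mean_N: "(\<lambda>n. real n * prob {\<omega> \<in> space M. N \<omega> = n}) sums e"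
    and factorial_moment_N: "(\<lambda>n. real n * (real n - 1) * prob {\<omega> \<in> space M. N \<omega> = n}) sums (c * e\<^sup>2)"
    and e: "e > 0" and c: "c > 1"
  shows "expectation (\<lambda>\<omega>. \<Sum>i=1..N \<omega>. real (X i \<omega>)) = e * jump_mean"
    and "variance (\<lambda>\<omega>. \<Sum>i=1..N \<omega>. real (X i \<omega>))
           = e * (jump_second_moment + jump_mean\<^sup>2 * e * (c - 1))"
    and "expectation (\<lambda>\<omega>. \<Sum>i=1..N \<omega>. real (X i \<omega>)) < variance (\<lambda>\<omega>. \<Sum>i=1..N \<omega>. real (X i \<omega>))"
proof -
  note moments = compound_sum_expectation_variance[OF mean_N factorial_moment_N]
  show "expectation (\<lambda>\<omega>. \<Sum>i=1..N \<omega>. real (X i \<omega>)) = e * jump_mean" by (fact moments(1))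
  show Var: "variance (\<lambda>\<omega>. \<Sum>i=1..N \<omega>. real (X i \<omega>))
               = e * (jump_second_moment + jump_mean\<^sup>2 * e * (c - 1))"
    unfolding moments(2) by (simp add: power2_eq_square algebra_simps)
  have "q j \<ge> 0" if "j \<in> {1..k}" for j
    using distX[OF _ that, of 1] measure_nonneg[of M] by (metis order_refl)
  from positive_integer_moments[OF this q_sum]
  have "1 \<le> jump_mean" "jump_mean \<le> jump_second_moment"
    unfolding jump_mean_def jump_second_moment_def by blast+
  moreover from this e c have "jump_mean\<^sup>2 * e * (c - 1) > 0" by simp
  ultimately have "e * jump_mean < e * (jump_second_moment + jump_mean\<^sup>2 * e * (c - 1))"
    using e by simp
  thus "expectation (\<lambda>\<omega>. \<Sum>i=1..N \<omega>. real (X i \<omega>)) < variance (\<lambda>\<omega>. \<Sum>i=1..N \<omega>. real (X i \<omega>))"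
    unfolding Var[symmetric] moments(1)[symmetric] .
qed

end

theorem mainTheorem10:
  fixes M :: "'a measure"
    and k :: nat
    and lam :: "nat \<Rightarrow> real \<Rightarrow> real"
    and \<alpha> t :: real
    and N :: "'a \<Rightarrow> nat"
    and X :: "nat \<Rightarrow> 'a \<Rightarrow> nat"
    and MM :: "'a \<Rightarrow> nat"
  assumes "k \<ge> 1"
    and lam_nonneg: "\<And>j s. j \<in> {1..k} \<Longrightarrow> s \<ge> 0 \<Longrightarrow> lam j s \<ge> 0"
    and lam_locint: "\<And>j T. j \<in> {1..k} \<Longrightarrow> T \<ge> 0 \<Longrightarrow> set_integrable lborel {0..T} (lam j)"
    and alpha: "0 < \<alpha>" "\<alpha> < 1"
    and t_pos: "t > 0"
    and Lam_pos: "(\<Sum>j=1..k. Lam (lam j) t) > 0"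
    and P: "prob_space M"
    and indep: "prob_space.indep_vars M (\<lambda>_. count_space UNIV)
                  (\<lambda>i. case i of None \<Rightarrow> N | Some n \<Rightarrow> X n) UNIV"
    and distN: "\<And>n. measure M {\<omega> \<in> space M. N \<omega> = n} =
                  (\<Sum>j=1..k. Lam (lam j) t) powr (real n * \<alpha>) *
                  mittag_leffler3 (real n + 1) \<alpha> (real n * \<alpha> + 1)
                    (- ((\<Sum>j=1..k. Lam (lam j) t) powr \<alpha>))"
    and distX: "\<And>i j. i \<ge> 1 \<Longrightarrow> j \<in> {1..k} \<Longrightarrow>
                  measure M {\<omega> \<in> space M. X i \<omega> = j} =
                  Lam (lam j) t / (\<Sum>j=1..k. Lam (lam j) t)"
    and MM_def: "\<And>\<omega>. MM \<omega> = (\<Sum>i=1..N \<omega>. X i \<omega>)"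
  shows "(prob_space.expectation M (\<lambda>\<omega>. real (MM \<omega>)) =
           (\<Sum>j=1..k. Lam (lam j) t) powr \<alpha> / Gamma (\<alpha> + 1) *
           ((1 / (\<Sum>j=1..k. Lam (lam j) t)) * (\<Sum>j=1..k. real j * Lam (lam j) t))) \<and>
         (prob_space.variance M (\<lambda>\<omega>. real (MM \<omega>)) =
           (\<Sum>j=1..k. Lam (lam j) t) powr \<alpha> / Gamma (\<alpha> + 1) *
           ((1 / (\<Sum>j=1..k. Lam (lam j) t)) * (\<Sum>j=1..k. (real j)^2 * Lam (lam j) t)
            + ((1 / (\<Sum>j=1..k. Lam (lam j) t)) * (\<Sum>j=1..k. real j * Lam (lam j) t))^2
              * ((\<Sum>j=1..k. Lam (lam j) t) powr \<alpha> / Gamma (\<alpha> + 1))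
              * (\<alpha> * Beta \<alpha> (1/2) / 2 powr (2 * \<alpha> - 1) - 1))) \<and>
         (prob_space.variance M (\<lambda>\<omega>. real (MM \<omega>)) >
           prob_space.expectation M (\<lambda>\<omega>. real (MM \<omega>)))"
proof -
  interpret prob_space M by (rule P)
  define L where "L = (\<Sum>j=1..k. Lam (lam j) t)"
  define q where "q j = Lam (lam j) t / L" for j
  define e where "e = L powr \<alpha> / Gamma (\<alpha> + 1)"
  define c where "c = \<alpha> * Beta \<alpha> (1/2) / 2 powr (2 * \<alpha> - 1)"
  have L: "L > 0" using Lam_pos by (simp add: L_def)
  have "L powr (real n * \<alpha>) = (L powr \<alpha>) ^ n" for n
    using L by (simp add: powr_powr[symmetric] powr_realpow mult.commute)
  hence pmf_N: "prob {\<omega> \<in> space M. N \<omega> = n} = fractional_poisson_pmf \<alpha> (L powr \<alpha>) n" for n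
    using distN[of n] by (simp add: L_def fractional_poisson_pmf_def)
  interpret compound_sum M N X k q
    using indep distX L by unfold_locales (simp_all add: q_def L_def flip: sum_divide_distrib)
  have c: "c = 2 * Gamma (\<alpha> + 1) ^ 2 / Gamma (2 * \<alpha> + 1)" "c > 1"
    using Beta_half_eq_Gamma_ratio[of \<alpha>] Gamma_duplication_ratio_gt_one[of \<alpha>] alpha by (simp_all add: c_def)
  have mean_N: "(\<lambda>n. real n * prob {\<omega> \<in> space M. N \<omega> = n}) sums e"
    and factorial_moment_N: "(\<lambda>n. real n * (real n - 1) * prob {\<omega> \<in> space M. N \<omega> = n}) sums (c * e\<^sup>2)"
    using fractional_poisson_mean[of \<alpha> "L powr \<alpha>"] fractional_poisson_second_factorial_moment[of \<alpha> "L powr \<alpha>"]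
      alpha L by (simp_all add: pmf_N e_def c(1))
  have "e > 0" using L alpha by (simp add: e_def)
  note moments = compound_sum_overdispersion[OF mean_N factorial_moment_N this c(2)]
  have "real (MM \<omega>) = (\<Sum>i=1..N \<omega>. real (X i \<omega>))" for \<omega> by (simp add: MM_def)
  moreover have "1 / L * (\<Sum>j=1..k. real j * Lam (lam j) t) = jump_mean"
    and "1 / L * (\<Sum>j=1..k. (real j)\<^sup>2 * Lam (lam j) t) = jump_second_moment"
    unfolding jump_mean_def jump_second_moment_def q_def sum_distrib_left by (auto intro: sum.cong)
  ultimately show ?thesis
    using moments unfolding L_def[symmetric] e_def[symmetric] c_def[symmetric] by simp
qed

end
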